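(* Let $H$ be a $k$-graph on vertex set $[n]$ ($n$ divisible by $q$) and let $r=r(n)\ll n^{k-3/2}$. Let $\sigma_1,\dots,\sigma_r$ be independent uniformly random permutations of $[n]$ and $D_i=D_{\sigma_i}$. Then with probability $1-o(n^{-1})$, for every $t$ with $1\le t\le 2q-k$, every set $S$ of $k+t$ vertices is condensed in at most $4q+1$ of the $D_i$.
   Context: Fixed integers $k,\ell$ with $1\le\ell<k/2$; $z=\lceil(k-\ell)/\ell\rceil$, $q=\ell z$. $a_n\ll b_n$ means $b_n/a_n\to\infty$. For ordered $q$-tuples $\mathbf v_1=(v_1,\dots,v_q)$, $\mathbf v_2=(v_{q+1},\dots,v_{2q})$ let $e_i(\mathbf v_1,\mathbf v_2)=\{v_{i\ell+1},\dots,v_{i\ell+k}\}$, $i=0,\dots,z-1$; $\mathbf v_1$ precedes $\mathbf v_2$ if all these are edges of $H$, and then $(\mathbf v_1,\mathbf v_2)$ owns these $z$ edges. For a permutation $\sigma$ of $[n]$, $D_\sigma$ has vertex set $\{(\sigma((i-1)q+1),\dots,\sigma(iq)):i\le n/q\}$ and an arc $\mathbf v\to\mathbf w$ ($\mathbf v\ne\mathbf w$) iff $\mathbf v$ precedes $\mathbf w$. Each edge $e$ of $H$ is owned by at most one arc $u_i(e)$ of $D_i$; if it exists, $\phi_i(e)$ denotes the set of $z$ edges owned by $u_i(e)$ (so $e\in\phi_i(e)$). A set $S$ of $k+t$ vertices is condensed in $D_i$ if there exist edges $e_1\neq e_2$ of $H$ with $S=e_1\cup e_2$ and $\phi_i(e_1)\cap\phi_i(e_2)\neq\emptyset$.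 *)

theory Defs
  imports Complex_Main "HOL-Combinatorics.Permutations" "HOL-Library.FuncSet"
begin

definition zpar :: "nat \<Rightarrow> nat \<Rightarrow> nat" where
  "zpar k l = nat \<lceil>real (k - l) / real l\<rceil>"

definition qpar :: "nat \<Rightarrow> nat \<Rightarrow> nat" where
  "qpar k l = l * zpar k l"

text \<open>A q-tuple is a list; the concatenation v = v1 @ v2 has v!(j-1) = v_j.
  e_i(v1,v2) = {v_{il+1}, ..., v_{il+k}}.\<close>
definition ewin :: "nat \<Rightarrow> nat \<Rightarrow> nat list \<Rightarrow> nat list \<Rightarrow> nat \<Rightarrow> nat set" where
  "ewin k l v1 v2 i = set (take k (drop (i * l) (v1 @ v2)))"

definition precedes :: "nat set set \<Rightarrow> nat \<Rightarrow> nat \<Rightarrow> nat list \<Rightarrow> nat list \<Rightarrow> bool" where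
  "precedes H k l v1 v2 \<longleftrightarrow> (\<forall>i < zpar k l. ewin k l v1 v2 i \<in> H)"

definition owned :: "nat \<Rightarrow> nat \<Rightarrow> nat list \<Rightarrow> nat list \<Rightarrow> nat set set" where
  "owned k l v1 v2 = {ewin k l v1 v2 i | i. i < zpar k l}"

definition blk :: "nat \<Rightarrow> (nat \<Rightarrow> nat) \<Rightarrow> nat \<Rightarrow> nat list" where
  "blk q \<sigma> i = map \<sigma> [(i - 1) * q + 1 ..< i * q + 1]"

definition Dverts :: "nat \<Rightarrow> nat \<Rightarrow> nat \<Rightarrow> (nat \<Rightarrow> nat) \<Rightarrow> nat list set" where
  "Dverts k l n \<sigma> = {blk (qpar k l) \<sigma> i | i. 1 \<le> i \<and> i \<le> n div qpar k l}"

definition Darc :: "nat set set \<Rightarrow> nat \<Rightarrow> nat \<Rightarrow> nat \<Rightarrow> (nat \<Rightarrow> nat) \<Rightarrow> nat list \<Rightarrow> nat list \<Rightarrow> bool" where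
  "Darc H k l n \<sigma> v w \<longleftrightarrow> v \<in> Dverts k l n \<sigma> \<and> w \<in> Dverts k l n \<sigma> \<and> v \<noteq> w \<and> precedes H k l v w"

definition has_owner :: "nat set set \<Rightarrow> nat \<Rightarrow> nat \<Rightarrow> nat \<Rightarrow> (nat \<Rightarrow> nat) \<Rightarrow> nat set \<Rightarrow> bool" where
  "has_owner H k l n \<sigma> e \<longleftrightarrow> (\<exists>v w. Darc H k l n \<sigma> v w \<and> e \<in> owned k l v w)"

definition phi :: "nat set set \<Rightarrow> nat \<Rightarrow> nat \<Rightarrow> nat \<Rightarrow> (nat \<Rightarrow> nat) \<Rightarrow> nat set \<Rightarrow> nat set set" where
  "phi H k l n \<sigma> e = (THE A. \<exists>v w. Darc H k l n \<sigma> v w \<and> e \<in> owned k l v w \<and> A = owned k l v w)"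

definition condensed :: "nat set set \<Rightarrow> nat \<Rightarrow> nat \<Rightarrow> nat \<Rightarrow> (nat \<Rightarrow> nat) \<Rightarrow> nat set \<Rightarrow> bool" where
  "condensed H k l n \<sigma> S \<longleftrightarrow>
     (\<exists>e1 e2. e1 \<in> H \<and> e2 \<in> H \<and> e1 \<noteq> e2 \<and> S = e1 \<union> e2 \<and>
        has_owner H k l n \<sigma> e1 \<and> has_owner H k l n \<sigma> e2 \<and>
        phi H k l n \<sigma> e1 \<inter> phi H k l n \<sigma> e2 \<noteq> {})"

definition kgraph :: "nat \<Rightarrow> nat \<Rightarrow> nat set set \<Rightarrow> bool" where
  "kgraph k n H \<longleftrightarrow> (\<forall>e \<in> H. e \<subseteq> {1..n} \<and> card e = k)"

text \<open>Sample space: r independent uniform permutations of [n], as the uniform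
  distribution on the finite set of r-tuples of permutations.\<close>
definition perm_tuples :: "nat \<Rightarrow> nat \<Rightarrow> (nat \<Rightarrow> nat \<Rightarrow> nat) set" where
  "perm_tuples n r = Pi\<^sub>E {..<r} (\<lambda>_. {\<sigma>. \<sigma> permutes {1..n}})"

definition bad :: "nat set set \<Rightarrow> nat \<Rightarrow> nat \<Rightarrow> nat \<Rightarrow> nat \<Rightarrow> (nat \<Rightarrow> nat \<Rightarrow> nat) set" where
  "bad H k l n r = {\<sigma>s \<in> perm_tuples n r.
     \<exists>t. 1 \<le> t \<and> t \<le> 2 * qpar k l - k \<and>
       (\<exists>S. S \<subseteq> {1..n} \<and> card S = k + t \<and>
          card {i \<in> {..<r}. condensed H k l n (\<sigma>s i) S} > 4 * qpar k l + 1)}"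

definition fail_prob :: "nat set set \<Rightarrow> nat \<Rightarrow> nat \<Rightarrow> nat \<Rightarrow> nat \<Rightarrow> real" where
  "fail_prob H k l n r = real (card (bad H k l n r)) / real (card (perm_tuples n r))"

end

theory Submission
  imports Defs
begin

text \<open>If \<open>\<sigma>\<close> condenses $S = e_1 \cup e_2$, the owning arcs of $e_1$ and $e_2$ coincide, because a
  window $e_i(\mathbf v, \mathbf w)$ determines the ordered pair of blocks it lies in. Hence $S$ is
  contained in the $2q$ vertices of two of the $n/q$ blocks of $D_\sigma$, which by symmetry happens
  with probability at most $(n/q)^2 \binom{2q}{s} / \binom{n}{s}$ for $s = |S|$. A union bound over
  $s = k + t$, over $S$ and over $4q+2$ of the $r$ permutations bounds $n$ times the failure
  probability by a constant times $(r / n^{k-3/2})^{4q+2}$, using $\binom{n}{s} \ge (n/s)^s$.\<close>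

section \<open>Blocks and windows of positions\<close>

definition block_pos :: "nat \<Rightarrow> nat \<Rightarrow> nat set" where
  "block_pos q a = {(a - 1) * q + 1 ..< a * q + 1}"

definition window_pos :: "nat \<Rightarrow> nat \<Rightarrow> nat \<Rightarrow> nat \<Rightarrow> nat \<Rightarrow> nat \<Rightarrow> nat set" where
  "window_pos k l q a b i =
     {(a - 1) * q + 1 + i * l ..< a * q + 1} \<union> {(b - 1) * q + 1 ..< (b - 1) * q + 1 + (i * l + k - q)}"

lemma set_blk: "set (blk q \<sigma> a) = \<sigma> ` block_pos q a"
  unfolding blk_def block_pos_def by (simp only: set_map set_upt)

lemma block_pos_disjoint:
  assumes "a \<noteq> b"
  shows "block_pos q a \<inter> block_pos q b = {}"
proof -
  have "block_pos q a \<inter> block_pos q b = {}" if "a < b" for a b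
  proof (cases "a = 0")
    case False
    with that have "a * q \<le> (b - 1) * q" by (intro mult_le_mono1) linarith
    then show ?thesis unfolding block_pos_def by auto
  qed (simp add: block_pos_def)
  from this[of a b] this[of b a] assms show ?thesis
    by (cases "a < b") (auto simp: Int_commute)
qed

lemma block_pos_subset:
  assumes "a \<le> n div q"
  shows "block_pos q a \<subseteq> {1..n}"
proof -
  have "a * q \<le> n div q * q" using assms by (rule mult_le_mono1)
  also have "\<dots> \<le> n" by (rule div_times_less_eq_dividend)
  finally show ?thesis unfolding block_pos_def by auto
qed

lemma card_block_pos: "1 \<le> a \<Longrightarrow> card (block_pos q a) = q"
  unfolding block_pos_def by (cases a) auto

lemma last_in_block_pos: "1 \<le> a \<Longrightarrow> 0 < q \<Longrightarrow> a * q \<in> block_pos q a"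
  unfolding block_pos_def by (cases a) auto

lemma first_in_block_pos: "1 \<le> a \<Longrightarrow> 0 < q \<Longrightarrow> (a - 1) * q + 1 \<in> block_pos q a"
  unfolding block_pos_def by (cases a) auto

lemma ewin_blk:
  assumes "1 \<le> a" "1 \<le> b" "i * l \<le> q" "q \<le> i * l + k" "i * l + k \<le> 2 * q"
  shows "ewin k l (blk q \<sigma> a) (blk q \<sigma> b) i = \<sigma> ` window_pos k l q a b i"
proof -
  define A where "A = [(a - 1) * q + 1 ..< a * q + 1]"
  define B where "B = [(b - 1) * q + 1 ..< b * q + 1]"
  have aq: "a * q = (a - 1) * q + q" and bq: "b * q = (b - 1) * q + q"
    using assms(1,2) by (cases a; cases b; simp)+
  have "length A = q" unfolding A_def using aq by simp
  then have "take k (drop (i * l) (A @ B)) = drop (i * l) A @ take (i * l + k - q) B"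
    using assms by (simp add: add.commute)
  also have "drop (i * l) A = [(a - 1) * q + 1 + i * l ..< a * q + 1]"
    unfolding A_def drop_upt by (simp add: ac_simps)
  also have "take (i * l + k - q) B = [(b - 1) * q + 1 ..< (b - 1) * q + 1 + (i * l + k - q)]"
    unfolding B_def using bq assms by (subst take_upt) auto
  finally have "set (take k (drop (i * l) (A @ B))) = window_pos k l q a b i"
    by (simp only: set_append set_upt window_pos_def)
  then show ?thesis
    unfolding ewin_def blk_def A_def[symmetric] B_def[symmetric]
    by (simp only: map_append[symmetric] drop_map take_map set_map)
qed

lemma owned_subset_set: "e \<in> owned k l v w \<Longrightarrow> e \<subseteq> set v \<union> set w"
  unfolding owned_def ewin_def by (auto dest: in_set_takeD in_set_dropD)

section \<open>Counting permutations\<close>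

lemma exists_permutes_image_eq:
  assumes "finite A" "S \<subseteq> A" "S' \<subseteq> A" "card S = card S'"
  obtains \<pi> where "\<pi> permutes A" "\<pi> ` S = S'"
proof -
  have fin: "finite S" "finite S'" using assms finite_subset by blast+
  obtain f where f: "bij_betw f S S'" using finite_same_card_bij[OF fin assms(4)] by blast
  have "card (A - S) = card (A - S')" using assms fin by (simp add: card_Diff_subset)
  then obtain g where g: "bij_betw g (A - S) (A - S')"
    using finite_same_card_bij assms(1) by blast
  define \<pi> where "\<pi> = (\<lambda>x. if x \<in> S then f x else if x \<in> A then g x else x)"
  have "bij_betw \<pi> (S \<union> (A - S)) (S' \<union> (A - S'))"
    unfolding \<pi>_def by (rule bij_betw_disjoint_Un[OF f]) (auto intro: bij_betw_cong[THEN iffD1, OF _ g])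
  then have "\<pi> permutes A" using assms(2,3) by (intro bij_imp_permutes) (auto simp: \<pi>_def Un_absorb1)
  moreover have "\<pi> ` S = S'" using f unfolding \<pi>_def bij_betw_def by (auto cong: image_cong)
  ultimately show ?thesis using that by blast
qed

definition covering_perms :: "'a set \<Rightarrow> 'a set \<Rightarrow> 'a set \<Rightarrow> ('a \<Rightarrow> 'a) set" where
  "covering_perms A T S = {\<sigma>. \<sigma> permutes A \<and> S \<subseteq> \<sigma> ` T}"

lemma finite_covering_perms: "finite A \<Longrightarrow> finite (covering_perms A T S)"
  unfolding covering_perms_def by (rule finite_subset[OF _ finite_permutations]) auto

lemma card_covering_perms_eq:
  assumes "finite A" "S \<subseteq> A" "S' \<subseteq> A" "card S = card S'"
  shows "card (covering_perms A T S) = card (covering_perms A T S')"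
proof -
  have le: "card (covering_perms A T S) \<le> card (covering_perms A T S')"
    if hyps: "S \<subseteq> A" "S' \<subseteq> A" "card S = card S'" for S S'
  proof -
    obtain \<pi> where \<pi>: "\<pi> permutes A" "\<pi> ` S = S'"
      using exists_permutes_image_eq[OF assms(1) hyps] by blast
    have "inj_on ((\<circ>) \<pi>) (covering_perms A T S)"
      using permutes_inj[OF \<pi>(1)] by (auto intro!: inj_onI simp: fun_eq_iff inj_eq)
    moreover have "(\<circ>) \<pi> ` covering_perms A T S \<subseteq> covering_perms A T S'"
      using \<pi> unfolding covering_perms_def by (auto intro: permutes_compose simp flip: image_comp)
    ultimately show ?thesis
      using finite_covering_perms[OF assms(1)] by (intro card_inj_on_le)
  qed
  show ?thesis using le[OF assms(2-4)] le[OF assms(3,2) assms(4)[symmetric]] by (rule antisym)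
qed

lemma sum_card_swap:
  assumes "finite A" "finite B"
  shows "(\<Sum>x\<in>A. card {y\<in>B. R x y}) = (\<Sum>y\<in>B. card {x\<in>A. R x y})"
proof -
  have "card {y\<in>B. R x y} = (\<Sum>y\<in>B. if R x y then 1 else 0)" for x
    using assms by (simp add: sum.If_cases Int_def conj_commute)
  moreover have "card {x\<in>A. R x y} = (\<Sum>x\<in>A. if R x y then 1 else 0)" for y
    using assms by (simp add: sum.If_cases Int_def conj_commute)
  ultimately show ?thesis using sum.swap by simp
qed

text \<open>By symmetry every $s$-set is covered equally often, and double counting pairs
  $(\sigma, S)$ with $S \subseteq \sigma(T)$ gives the total.\<close>

lemma card_covering_perms:
  assumes A: "finite A" and T: "T \<subseteq> A" and S: "S \<subseteq> A" "card S = s"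
  shows "card (covering_perms A T S) * (card A choose s) = fact (card A) * (card T choose s)"
proof -
  define Subs where "Subs = {S'. S' \<subseteq> A \<and> card S' = s}"
  define P where "P = {\<sigma>. \<sigma> permutes A}"
  have finite: "finite Subs" "finite P"
    unfolding Subs_def P_def using A by (auto intro: finite_permutations)
  have "card (covering_perms A T S) * (card A choose s) = (\<Sum>S'\<in>Subs. card (covering_perms A T S'))"
  proof -
    have "card (covering_perms A T S') = card (covering_perms A T S)" if "S' \<in> Subs" for S'
      using that S unfolding Subs_def by (intro card_covering_perms_eq[OF A]) auto
    then show ?thesis using n_subsets[OF A, of s] by (simp add: Subs_def)
  qed
  also have "\<dots> = (\<Sum>S'\<in>Subs. card {\<sigma>\<in>P. S' \<subseteq> \<sigma> ` T})"
    unfolding covering_perms_def P_def by simp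
  also have "\<dots> = (\<Sum>\<sigma>\<in>P. card {S'\<in>Subs. S' \<subseteq> \<sigma> ` T})"
    by (rule sum_card_swap[OF finite])
  also have "\<dots> = (\<Sum>\<sigma>\<in>P. card T choose s)"
  proof (rule sum.cong[OF refl])
    fix \<sigma> assume "\<sigma> \<in> P"
    then have \<sigma>: "\<sigma> permutes A" unfolding P_def by simp
    have "{S'\<in>Subs. S' \<subseteq> \<sigma> ` T} = {S'. S' \<subseteq> \<sigma> ` T \<and> card S' = s}"
      unfolding Subs_def using permutes_image[OF \<sigma>] T by blast
    moreover have "card (\<sigma> ` T) = card T"
      using card_image inj_on_subset[OF permutes_inj_on[OF \<sigma>] T] by blast
    ultimately show "card {S'\<in>Subs. S' \<subseteq> \<sigma> ` T} = card T choose s"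
      using n_subsets[of "\<sigma> ` T" s] finite_subset[OF T A] by simp
  qed
  also have "\<dots> = fact (card A) * (card T choose s)"
    using card_permutations[OF refl A] by (simp add: P_def)
  finally show ?thesis .
qed

lemma card_covering_perms_two_blocks:
  assumes "1 \<le> a" "a \<le> n div q" "1 \<le> b" "b \<le> n div q" "a \<noteq> b" "S \<subseteq> {1..n}" "card S = s"
  shows "card (covering_perms {1..n} (block_pos q a \<union> block_pos q b) S) * (n choose s)
           = fact n * ((2 * q) choose s)"
proof -
  have "block_pos q a \<union> block_pos q b \<subseteq> {1..n}" using block_pos_subset assms by blast
  moreover have "card (block_pos q a \<union> block_pos q b) = 2 * q"
    using card_block_pos assms block_pos_disjoint[OF assms(5)]
    by (simp add: card_Un_disjoint block_pos_def)
  ultimately show ?thesis using card_covering_perms[of "{1..n}" _ S s] assms(6,7) by simp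
qed

lemma card_PiE_if:
  assumes "finite X" "I \<subseteq> X"
  shows "card (PiE X (\<lambda>i. if i \<in> I then A else B)) = card A ^ card I * card B ^ (card X - card I)"
proof -
  have "card (PiE X (\<lambda>i. if i \<in> I then A else B)) = (\<Prod>i\<in>X. if i \<in> I then card A else card B)"
    using assms(1) by (simp add: card_PiE if_distrib)
  also have "\<dots> = (\<Prod>i\<in>I. card A) * (\<Prod>i\<in>X - I. card B)"
    using prod.If_cases[OF assms(1), of "\<lambda>i. i \<in> I" "\<lambda>_. card A" "\<lambda>_. card B"] assms(2)
    by (simp add: Int_absorb1 Diff_eq)
  finally show ?thesis using assms by (simp add: card_Diff_subset finite_subset)
qed

lemma tuples_many_hits_subset:
  "{xs \<in> PiE X (\<lambda>_. P). \<exists>S\<in>\<S>. m \<le> card {i\<in>X. xs i \<in> A S}}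
     \<subseteq> (\<Union>S\<in>\<S>. \<Union>I\<in>{I. I \<subseteq> X \<and> card I = m}. PiE X (\<lambda>i. if i \<in> I then A S else P))"
proof clarify
  fix xs S assume xs: "xs \<in> PiE X (\<lambda>_. P)" and "S \<in> \<S>" and many: "m \<le> card {i\<in>X. xs i \<in> A S}"
  obtain I where "I \<subseteq> {i\<in>X. xs i \<in> A S}" "card I = m"
    using obtain_subset_with_card_n[OF many] by blast
  with xs \<open>S \<in> \<S>\<close> show "xs \<in> (\<Union>S\<in>\<S>. \<Union>I\<in>{I. I \<subseteq> X \<and> card I = m}. PiE X (\<lambda>i. if i \<in> I then A S else P))"
    by (auto simp: PiE_iff)
qed

lemma card_tuples_many_hits_le:
  fixes A :: "'s \<Rightarrow> 'a set"
  assumes P: "finite P" and \<S>: "finite \<S>" and A: "\<And>S. S \<in> \<S> \<Longrightarrow> A S \<subseteq> P"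
    and p: "\<And>S. S \<in> \<S> \<Longrightarrow> real (card (A S)) \<le> p * real (card P)"
  shows "real (card {xs \<in> PiE {..<r} (\<lambda>_. P). \<exists>S\<in>\<S>. m \<le> card {i\<in>{..<r}. xs i \<in> A S}})
           \<le> real (card \<S>) * real (r choose m) * p ^ m * real (card P) ^ r"
proof -
  define \<I> where "\<I> = {I. I \<subseteq> {..<r} \<and> card I = m}"
  define E where "E S I = PiE {..<r} (\<lambda>i. if i \<in> I then A S else P)" for S I
  have finite_\<I>: "finite \<I>" unfolding \<I>_def by simp
  have finite_E: "finite (E S I)" if "S \<in> \<S>" for S I
    unfolding E_def using P A[OF that] finite_subset by (intro finite_PiE) auto
  have "{xs \<in> PiE {..<r} (\<lambda>_. P). \<exists>S\<in>\<S>. m \<le> card {i\<in>{..<r}. xs i \<in> A S}}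
      \<subseteq> (\<Union>S\<in>\<S>. \<Union>I\<in>\<I>. E S I)"
    unfolding \<I>_def E_def by (rule tuples_many_hits_subset)
  then have "card {xs \<in> PiE {..<r} (\<lambda>_. P). \<exists>S\<in>\<S>. m \<le> card {i\<in>{..<r}. xs i \<in> A S}}
      \<le> card (\<Union>S\<in>\<S>. \<Union>I\<in>\<I>. E S I)"
    using \<S> finite_\<I> finite_E by (intro card_mono) auto
  also have "\<dots> \<le> (\<Sum>S\<in>\<S>. card (\<Union>I\<in>\<I>. E S I))"
    by (rule card_UN_le[OF \<S>])
  also have "\<dots> \<le> (\<Sum>S\<in>\<S>. \<Sum>I\<in>\<I>. card (E S I))"
    by (intro sum_mono card_UN_le[OF finite_\<I>])
  finally have "real (card {xs \<in> PiE {..<r} (\<lambda>_. P). \<exists>S\<in>\<S>. m \<le> card {i\<in>{..<r}. xs i \<in> A S}})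
      \<le> (\<Sum>S\<in>\<S>. \<Sum>I\<in>\<I>. real (card (E S I)))"
    by (simp only: of_nat_le_iff of_nat_sum[symmetric])
  also have "\<dots> \<le> (\<Sum>S\<in>\<S>. \<Sum>I\<in>\<I>. p ^ m * real (card P) ^ r)"
  proof (intro sum_mono)
    fix S I assume "S \<in> \<S>" "I \<in> \<I>"
    then have I: "I \<subseteq> {..<r}" "card I = m" and "m \<le> r"
      unfolding \<I>_def using card_mono[of "{..<r}" I] by auto
    have "real (card (E S I)) = real (card (A S)) ^ m * real (card P) ^ (r - m)"
      unfolding E_def using card_PiE_if[OF finite_lessThan I(1), of "A S" P] I(2) by simp
    also have "\<dots> \<le> (p * real (card P)) ^ m * real (card P) ^ (r - m)"
      using p[OF \<open>S \<in> \<S>\<close>] by (intro mult_right_mono power_mono) auto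
    also have "\<dots> = p ^ m * real (card P) ^ r"
      using \<open>m \<le> r\<close> by (simp add: power_mult_distrib mult.assoc flip: power_add)
    finally show "real (card (E S I)) \<le> p ^ m * real (card P) ^ r" .
  qed
  also have "\<dots> = real (card \<S>) * real (r choose m) * p ^ m * real (card P) ^ r"
    using n_subsets[of "{..<r}" m] by (simp add: \<I>_def)
  finally show ?thesis .
qed

section \<open>Estimates for the union bound\<close>

lemma choose_le_power: "n choose k \<le> n ^ k"
  by (cases "k \<le> n") (simp_all add: binomial_le_pow binomial_eq_0)

lemma union_bound_term_le:
  fixes n r s N B m :: nat
  assumes s: "1 \<le> s" "s \<le> n" and N: "N \<le> n" and m: "1 \<le> m"
  shows "real n * (real (n choose s) * real (r choose m) * (real (N^2) * real B / real (n choose s)) ^ m)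
     \<le> real B ^ m * real s ^ (s * (m - 1)) * (real r ^ m * real n ^ (1 + 2 * m) / real n ^ (s * (m - 1)))"
proof -
  define c where "c = real (n choose s)"
  have c_pos: "c > 0" unfolding c_def using s by simp
  have n_pos: "real n > 0" using s by simp
  have lower: "(real n / real s) ^ s \<le> c" unfolding c_def by (rule binomial_ge_n_over_k_pow_k[OF s(2)])
  have lower_pos: "(real n / real s) ^ s > 0" using n_pos s by simp
  have r_choose: "real (r choose m) \<le> real r ^ m"
    using choose_le_power[of r m] by (metis of_nat_le_iff of_nat_power)
  have "c ^ m = c * c ^ (m - 1)" using m by (cases m) auto
  then have eq: "c * (real (N^2) * real B / c) ^ m = (real (N^2) * real B) ^ m / c ^ (m - 1)"
    using c_pos by (simp add: power_divide)
  have "real n * (c * real (r choose m) * (real (N^2) * real B / c) ^ m)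
      = real n * real (r choose m) * (c * (real (N^2) * real B / c) ^ m)"
    by (simp only: ac_simps)
  also have "\<dots> = real n * real (r choose m) * ((real (N^2) * real B) ^ m / c ^ (m - 1))"
    by (simp only: eq)
  also have "\<dots> \<le> real n * real r ^ m * ((real n ^ 2 * real B) ^ m / ((real n / real s) ^ s) ^ (m - 1))"
  proof -
    have "(real (N^2) * real B) ^ m \<le> (real n ^ 2 * real B) ^ m"
      using N by (intro power_mono mult_right_mono) auto
    moreover have "((real n / real s) ^ s) ^ (m - 1) \<le> c ^ (m - 1)"
      using lower lower_pos by (intro power_mono) auto
    ultimately have "(real (N^2) * real B) ^ m / c ^ (m - 1)
        \<le> (real n ^ 2 * real B) ^ m / ((real n / real s) ^ s) ^ (m - 1)"
      using lower_pos c_pos by (intro frac_le) auto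
    then show ?thesis using r_choose n_pos c_pos by (intro mult_mono) auto
  qed
  also have "\<dots> = real B ^ m * real s ^ (s * (m - 1)) * (real r ^ m * real n ^ (1 + 2 * m) / real n ^ (s * (m - 1)))"
    using n_pos s by (simp add: power_mult_distrib power_divide power_mult[symmetric] power_add field_simps)
  finally show ?thesis unfolding c_def .
qed

lemma power_ratio_le_powr:
  fixes X R a :: real and m s :: nat
  assumes X: "1 \<le> X" and R: "0 \<le> R" and m: "1 \<le> m"
    and exponent: "a * real m + 1 + 2 * real m \<le> real s * (real m - 1)"
  shows "R ^ m * X ^ (1 + 2 * m) / X ^ (s * (m - 1)) \<le> (R / X powr a) ^ m"
proof -
  have X_pos: "X > 0" using X by simp
  have "X ^ (1 + 2 * m) / X ^ (s * (m - 1)) = X powr real (1 + 2 * m) / X powr real (s * (m - 1))"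
    using X_pos by (simp only: powr_realpow)
  also have "\<dots> = X powr (real (1 + 2 * m) - real (s * (m - 1)))"
    by (rule powr_diff[symmetric])
  also have "\<dots> \<le> X powr (- (a * real m))"
    using X exponent m by (intro powr_mono) (auto simp: of_nat_diff)
  also have "\<dots> = 1 / (X powr a) ^ m"
    using X_pos by (simp add: powr_minus powr_powr divide_inverse flip: powr_realpow)
  finally have "R ^ m * (X ^ (1 + 2 * m) / X ^ (s * (m - 1))) \<le> R ^ m * (1 / (X powr a) ^ m)"
    using R by (intro mult_left_mono) auto
  then show ?thesis by (simp add: power_divide)
qed

section \<open>Owners of edges in \<open>D\<^sub>\<sigma>\<close>\<close>

lemma zpar_bounds:
  assumes "0 < l" "l < k"
  shows "l * zpar k l < k" and "k \<le> l * zpar k l + l"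
proof -
  have z: "real (zpar k l) = of_int \<lceil>real (k - l) / real l\<rceil>"
    unfolding zpar_def using assms by simp
  have "real (k - l) / real l \<le> real (zpar k l)" "real (zpar k l) < real (k - l) / real l + 1"
    unfolding z using ceiling_correct[of "real (k - l) / real l"] by linarith+
  then have "real (k - l) \<le> real l * real (zpar k l)" "real l * real (zpar k l) < real k"
    using assms by (simp_all add: field_simps of_nat_diff)
  then show "l * zpar k l < k" "k \<le> l * zpar k l + l"
    by (simp_all only: of_nat_mult[symmetric] of_nat_le_iff of_nat_less_iff)
qed

locale kl_params =
  fixes k l :: nat
  assumes l_pos: "1 \<le> l" and two_l_less_k: "2 * l < k"
begin

abbreviation "q \<equiv> qpar k l"
abbreviation "z \<equiv> zpar k l"

lemma q_less_k: "q < k" and k_le_q_plus_l: "k \<le> q + l"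
  using zpar_bounds[of l k] l_pos two_l_less_k unfolding qpar_def by auto

lemma k_less_two_q: "k < 2 * q"
  using q_less_k k_le_q_plus_l two_l_less_k by linarith

lemma q_pos: "0 < q"
  using k_less_two_q by simp

lemma window_offset_le: "i < z \<Longrightarrow> i * l + l \<le> q"
  using mult_le_mono1[of "Suc i" z l] unfolding qpar_def by (simp add: mult.commute)

lemma ewin_blk_window_pos:
  assumes "1 \<le> a" "1 \<le> b" "i < z"
  shows "ewin k l (blk q \<sigma> a) (blk q \<sigma> b) i = \<sigma> ` window_pos k l q a b i"
  using window_offset_le[OF assms(3)] q_less_k k_le_q_plus_l by (intro ewin_blk assms) auto

lemma window_pos_subset:
  assumes "1 \<le> b" "i < z"
  shows "window_pos k l q a b i \<subseteq> block_pos q a \<union> block_pos q b"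
proof -
  have "i * l + k - q \<le> q" using window_offset_le[OF assms(2)] k_le_q_plus_l by linarith
  moreover have "b * q = (b - 1) * q + q" using assms(1) by (cases b) auto
  ultimately show ?thesis unfolding window_pos_def block_pos_def by auto
qed

lemma last_in_window_pos:
  assumes "1 \<le> a" "i < z"
  shows "a * q \<in> window_pos k l q a b i"
proof -
  have "a * q = (a - 1) * q + q" using assms(1) by (cases a) auto
  then show ?thesis unfolding window_pos_def using window_offset_le[OF assms(2)] l_pos by auto
qed

lemma first_in_window_pos: "(b - 1) * q + 1 \<in> window_pos k l q a b i"
  unfolding window_pos_def using q_less_k by auto

lemma first_of_left_block_in_window_pos:
  assumes "1 \<le> a" "1 \<le> b" "a \<noteq> b" "i < z" "(a - 1) * q + 1 \<in> window_pos k l q a b i"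
  shows "i = 0"
proof -
  have "(a - 1) * q + 1 \<notin> block_pos q b"
    using first_in_block_pos[OF assms(1) q_pos] block_pos_disjoint[OF assms(3)] by blast
  moreover have "{(b - 1) * q + 1 ..< (b - 1) * q + 1 + (i * l + k - q)} \<subseteq> block_pos q b"
    using window_offset_le[OF assms(4)] k_le_q_plus_l assms(2) unfolding block_pos_def
    by (cases b) auto
  ultimately have "(a - 1) * q + 1 \<in> {(a - 1) * q + 1 + i * l ..< a * q + 1}"
    using assms(5) unfolding window_pos_def by blast
  then show ?thesis using l_pos by simp
qed

lemma last_of_right_block_notin_window_pos_0:
  assumes "1 \<le> b" "a \<noteq> b"
  shows "b * q \<notin> window_pos k l q a b 0"
proof
  assume b_in: "b * q \<in> window_pos k l q a b 0"
  have "b * q \<notin> {(a - 1) * q + 1 ..< a * q + 1}"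
    using last_in_block_pos[OF assms(1) q_pos] block_pos_disjoint[OF assms(2)]
    unfolding block_pos_def by blast
  moreover have "b * q = (b - 1) * q + q" using assms(1) by (cases b) auto
  ultimately show False using b_in k_less_two_q unfolding window_pos_def by auto
qed

text \<open>A window meets its left block in a nonempty final segment and its right block in a nonempty
  initial segment, never in both the first and the last position of the same block; so it
  determines the ordered pair of blocks.\<close>

lemma window_pos_determines_blocks:
  assumes ab: "1 \<le> a" "1 \<le> b" "a \<noteq> b" and cd: "1 \<le> c" "1 \<le> d" "c \<noteq> d"
    and ij: "i < z" "j < z"
    and eq: "window_pos k l q a b i = window_pos k l q c d j"
  shows "a = c \<and> b = d"
proof -
  have c_in: "c * q \<in> window_pos k l q a b i" and d_in: "(d - 1) * q + 1 \<in> window_pos k l q a b i"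
    using eq last_in_window_pos[OF cd(1) ij(2)] first_in_window_pos by auto
  have in_ab: "x \<in> block_pos q a \<union> block_pos q b" if "x \<in> window_pos k l q a b i" for x
    using that window_pos_subset[OF ab(2) ij(1)] by blast
  have "c = a \<or> c = b"
    using in_ab[OF c_in] last_in_block_pos[OF cd(1) q_pos] block_pos_disjoint by blast
  moreover have "d = a \<or> d = b"
    using in_ab[OF d_in] first_in_block_pos[OF cd(2) q_pos] block_pos_disjoint by blast
  moreover have False if "c = b" "d = a"
  proof -
    have "i = 0" using first_of_left_block_in_window_pos ab ij d_in that by blast
    then show False using last_of_right_block_notin_window_pos_0 ab c_in that by blast
  qed
  ultimately show ?thesis using cd(3) by blast
qed

lemma DarcE:
  assumes "Darc H k l n \<sigma> v w"
  obtains a b where "v = blk q \<sigma> a" "w = blk q \<sigma> b" "a \<noteq> b"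
    "1 \<le> a" "a \<le> n div q" "1 \<le> b" "b \<le> n div q"
  using assms unfolding Darc_def Dverts_def by auto

lemma owned_blk:
  assumes "1 \<le> a" "1 \<le> b"
  shows "owned k l (blk q \<sigma> a) (blk q \<sigma> b) = {\<sigma> ` window_pos k l q a b i | i. i < z}"
  unfolding owned_def using ewin_blk_window_pos[OF assms] by metis

lemma owner_unique:
  assumes \<sigma>: "\<sigma> permutes {1..n}"
    and vw: "Darc H k l n \<sigma> v w" "e \<in> owned k l v w"
    and vw': "Darc H k l n \<sigma> v' w'" "e \<in> owned k l v' w'"
  shows "v = v' \<and> w = w'"
proof -
  obtain a b where ab: "v = blk q \<sigma> a" "w = blk q \<sigma> b" "a \<noteq> b"
    "1 \<le> a" "a \<le> n div q" "1 \<le> b" "b \<le> n div q"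
    using vw(1) by (rule DarcE)
  obtain c d where cd: "v' = blk q \<sigma> c" "w' = blk q \<sigma> d" "c \<noteq> d"
    "1 \<le> c" "c \<le> n div q" "1 \<le> d" "d \<le> n div q"
    using vw'(1) by (rule DarcE)
  obtain i where i: "i < z" "e = \<sigma> ` window_pos k l q a b i"
    using vw(2) owned_blk ab by auto
  obtain j where j: "j < z" "e = \<sigma> ` window_pos k l q c d j"
    using vw'(2) owned_blk cd by auto
  have "window_pos k l q a b i \<subseteq> {1..n}" "window_pos k l q c d j \<subseteq> {1..n}"
    using window_pos_subset i(1) j(1) block_pos_subset ab cd by blast+
  then have "window_pos k l q a b i = window_pos k l q c d j"
    using i(2) j(2) inj_on_image_eq_iff[OF permutes_inj_on[OF \<sigma>]] by metis
  then show ?thesis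
    using window_pos_determines_blocks ab cd i(1) j(1) by blast
qed

lemma phi_eq_owned:
  assumes "\<sigma> permutes {1..n}" "Darc H k l n \<sigma> v w" "e \<in> owned k l v w"
  shows "phi H k l n \<sigma> e = owned k l v w"
  unfolding phi_def using assms owner_unique by (intro the_equality) blast+

text \<open>Two edges with intersecting owned sets have the same owning arc, so both lie among the
  $2q$ vertices of its two blocks.\<close>

lemma condensed_subset_two_blocks:
  assumes \<sigma>: "\<sigma> permutes {1..n}" and "condensed H k l n \<sigma> S"
  obtains a b where "1 \<le> a" "a \<le> n div q" "1 \<le> b" "b \<le> n div q" "a \<noteq> b"
    "S \<subseteq> \<sigma> ` (block_pos q a \<union> block_pos q b)"
proof -
  obtain e1 e2 v w v' w' where S: "S = e1 \<union> e2"
    and vw: "Darc H k l n \<sigma> v w" "e1 \<in> owned k l v w"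
    and vw': "Darc H k l n \<sigma> v' w'" "e2 \<in> owned k l v' w'"
    and meet: "phi H k l n \<sigma> e1 \<inter> phi H k l n \<sigma> e2 \<noteq> {}"
    using assms(2) unfolding condensed_def has_owner_def by blast
  obtain f where "f \<in> owned k l v w" "f \<in> owned k l v' w'"
    using meet phi_eq_owned[OF \<sigma> vw] phi_eq_owned[OF \<sigma> vw'] by blast
  then have "v' = v \<and> w' = w" using owner_unique[OF \<sigma> vw(1) _ vw'(1)] by blast
  then have "S \<subseteq> set v \<union> set w" using S vw(2) vw'(2) owned_subset_set by blast
  moreover obtain a b where "v = blk q \<sigma> a" "w = blk q \<sigma> b" "a \<noteq> b"
    "1 \<le> a" "a \<le> n div q" "1 \<le> b" "b \<le> n div q"
    using vw(1) by (rule DarcE)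
  ultimately show ?thesis using that by (simp add: set_blk image_Un)
qed

section \<open>The failure probability\<close>

definition condensing_perms :: "nat set set \<Rightarrow> nat \<Rightarrow> nat set \<Rightarrow> (nat \<Rightarrow> nat) set" where
  "condensing_perms H n S = {\<sigma>. \<sigma> permutes {1..n} \<and> condensed H k l n \<sigma> S}"

lemma condensing_perms_subset:
  "condensing_perms H n S \<subseteq>
     (\<Union>(a, b)\<in>{1..n div q} \<times> {1..n div q} - Id. covering_perms {1..n} (block_pos q a \<union> block_pos q b) S)"
proof
  fix \<sigma> assume "\<sigma> \<in> condensing_perms H n S"
  then have \<sigma>: "\<sigma> permutes {1..n}" and "condensed H k l n \<sigma> S"
    unfolding condensing_perms_def by auto
  then obtain a b where "(a, b) \<in> {1..n div q} \<times> {1..n div q} - Id"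
    "S \<subseteq> \<sigma> ` (block_pos q a \<union> block_pos q b)"
    by (elim condensed_subset_two_blocks) auto
  with \<sigma> show "\<sigma> \<in> (\<Union>(a, b)\<in>{1..n div q} \<times> {1..n div q} - Id.
      covering_perms {1..n} (block_pos q a \<union> block_pos q b) S)"
    unfolding covering_perms_def by force
qed

lemma card_condensing_perms_le:
  assumes S: "S \<subseteq> {1..n}" "card S = s"
  shows "real (card (condensing_perms H n S))
           \<le> real ((n div q)^2) * real ((2 * q) choose s) / real (n choose s) * real (fact n)"
proof -
  define pairs where "pairs = {1..n div q} \<times> {1..n div q} - Id"
  define C where "C = (\<lambda>(a, b). covering_perms {1..n} (block_pos q a \<union> block_pos q b) S)"
  have "s \<le> n" using S card_mono[of "{1..n}" S] by simp
  then have binom_pos: "real (n choose s) > 0" by simp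
  have "card (condensing_perms H n S) \<le> (\<Sum>p\<in>pairs. card (C p))"
    using condensing_perms_subset[of H n S] finite_covering_perms[of "{1..n}"]
    unfolding pairs_def C_def by (intro order.trans[OF card_mono card_UN_le]) auto
  then have "card (condensing_perms H n S) * (n choose s) \<le> (\<Sum>p\<in>pairs. card (C p) * (n choose s))"
    unfolding sum_distrib_right[symmetric] by (rule mult_right_mono) simp
  also have "\<dots> = (\<Sum>p\<in>pairs. fact n * ((2 * q) choose s))"
  proof (rule sum.cong[OF refl])
    fix p assume "p \<in> pairs"
    then show "card (C p) * (n choose s) = fact n * ((2 * q) choose s)"
      unfolding pairs_def C_def using card_covering_perms_two_blocks S
      by (cases p) (simp add: pair_in_Id_conv)
  qed
  also have "\<dots> = card pairs * (fact n * ((2 * q) choose s))" by simp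
  also have "\<dots> \<le> (n div q)^2 * (fact n * ((2 * q) choose s))"
    using card_mono[of "{1..n div q} \<times> {1..n div q}" pairs]
    unfolding pairs_def by (auto simp: power2_eq_square)
  finally have "real (card (condensing_perms H n S)) * real (n choose s)
      \<le> real ((n div q)^2) * (real (fact n) * real ((2 * q) choose s))"
    by (simp only: of_nat_mult[symmetric] of_nat_le_iff)
  then show ?thesis using binom_pos by (simp add: field_simps)
qed

lemma bad_subset:
  "bad H k l n r \<subseteq> (\<Union>t\<in>{1..2 * q - k}. {\<sigma>s \<in> perm_tuples n r.
     \<exists>S\<in>{S. S \<subseteq> {1..n} \<and> card S = k + t}. 4 * q + 2 \<le> card {i\<in>{..<r}. \<sigma>s i \<in> condensing_perms H n S}})"
proof
  fix \<sigma>s assume "\<sigma>s \<in> bad H k l n r"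
  then obtain t S where \<sigma>s: "\<sigma>s \<in> perm_tuples n r" and t: "t \<in> {1..2 * q - k}"
    and S: "S \<in> {S. S \<subseteq> {1..n} \<and> card S = k + t}"
    and many: "4 * q + 1 < card {i\<in>{..<r}. condensed H k l n (\<sigma>s i) S}"
    unfolding bad_def by auto
  have "{i\<in>{..<r}. condensed H k l n (\<sigma>s i) S} = {i\<in>{..<r}. \<sigma>s i \<in> condensing_perms H n S}"
    using \<sigma>s unfolding perm_tuples_def condensing_perms_def by auto
  with many have "4 * q + 2 \<le> card {i\<in>{..<r}. \<sigma>s i \<in> condensing_perms H n S}" by simp
  with \<sigma>s S t show "\<sigma>s \<in> (\<Union>t\<in>{1..2 * q - k}. {\<sigma>s \<in> perm_tuples n r.
     \<exists>S\<in>{S. S \<subseteq> {1..n} \<and> card S = k + t}. 4 * q + 2 \<le> card {i\<in>{..<r}. \<sigma>s i \<in> condensing_perms H n S}})"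
    by blast
qed

lemma fail_prob_le:
  "fail_prob H k l n r \<le> (\<Sum>t\<in>{1..2 * q - k}. real (n choose (k + t)) * real (r choose (4 * q + 2)) *
      (real ((n div q)^2) * real ((2 * q) choose (k + t)) / real (n choose (k + t))) ^ (4 * q + 2))"
proof -
  define m where "m = 4 * q + 2"
  define P where "P = {\<sigma> :: nat \<Rightarrow> nat. \<sigma> permutes {1..n}}"
  define \<S> where "\<S> t = {S. S \<subseteq> {1..n} \<and> card S = k + t}" for t
  define Bad where "Bad t = {\<sigma>s \<in> PiE {..<r} (\<lambda>_. P).
    \<exists>S\<in>\<S> t. m \<le> card {i\<in>{..<r}. \<sigma>s i \<in> condensing_perms H n S}}" for t
  define \<rho> where "\<rho> t = real ((n div q)^2) * real ((2 * q) choose (k + t)) / real (n choose (k + t))" for t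
  have P: "finite P" "card P = fact n"
    unfolding P_def using card_permutations[of "{1..n}" n] by (auto intro: finite_permutations)
  have perm_tuples: "perm_tuples n r = PiE {..<r} (\<lambda>_. P)"
    unfolding perm_tuples_def P_def ..
  have "finite (Bad t)" for t
  proof -
    have "finite (PiE {..<r} (\<lambda>_. P))" using P(1) by (simp add: finite_PiE)
    then show ?thesis unfolding Bad_def by (rule finite_subset[rotated]) auto
  qed
  then have "card (bad H k l n r) \<le> (\<Sum>t\<in>{1..2 * q - k}. card (Bad t))"
    using bad_subset[of H n r] unfolding Bad_def \<S>_def m_def perm_tuples
    by (intro order.trans[OF card_mono card_UN_le]) auto
  then have "real (card (bad H k l n r)) \<le> (\<Sum>t\<in>{1..2 * q - k}. real (card (Bad t)))"
    by (simp only: of_nat_le_iff of_nat_sum[symmetric])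
  also have "\<dots> \<le> (\<Sum>t\<in>{1..2 * q - k}. real (n choose (k + t)) * real (r choose m) * \<rho> t ^ m * real (fact n) ^ r)"
  proof (intro sum_mono)
    fix t
    have "card (\<S> t) = n choose (k + t)" unfolding \<S>_def using n_subsets[of "{1..n}"] by simp
    moreover have "real (card (condensing_perms H n S)) \<le> \<rho> t * real (card P)" if "S \<in> \<S> t" for S
      using card_condensing_perms_le[of S n] that P(2) unfolding \<S>_def \<rho>_def by simp
    ultimately show "real (card (Bad t)) \<le> real (n choose (k + t)) * real (r choose m) * \<rho> t ^ m * real (fact n) ^ r"
      using card_tuples_many_hits_le[OF P(1), of "\<S> t" "condensing_perms H n" "\<rho> t" r m] P
      unfolding Bad_def \<S>_def condensing_perms_def P_def by auto
  qed
  finally show ?thesis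
    unfolding fail_prob_def perm_tuples card_PiE[OF finite_lessThan] using P(2)
    by (simp add: divide_le_eq sum_distrib_right m_def \<rho>_def)
qed

lemma n_union_term_le:
  assumes t: "t \<in> {1..2 * q - k}" and n: "2 * q \<le> n"
  shows "real n * (real (n choose (k + t)) * real (r choose (4 * q + 2)) *
           (real ((n div q)^2) * real ((2 * q) choose (k + t)) / real (n choose (k + t))) ^ (4 * q + 2))
         \<le> real ((2 * q) choose (k + t)) ^ (4 * q + 2) * real (k + t) ^ ((k + t) * (4 * q + 1)) *
           (real r / real n powr (real k - 3 / 2)) ^ (4 * q + 2)"
proof -
  define m where "m = 4 * q + 2"
  have "k + t \<le> 2 * q" using t k_less_two_q by auto
  \<comment> \<open>With $s = k + t$ the power of $n$ is $1 + s - m(s - k - 1/2) \le 1 + s - m/2 \le 0$.\<close>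
  have exponent: "(real k - 3 / 2) * real m + 1 + 2 * real m \<le> real (k + t) * (real m - 1)"
  proof -
    have "real m \<le> real t * real m" using mult_right_mono[of 1 "real t" "real m"] t by simp
    moreover have "real k + real t \<le> 2 * real q" using \<open>k + t \<le> 2 * q\<close> by linarith
    ultimately show ?thesis unfolding m_def by (simp add: algebra_simps)
  qed
  have "real n * (real (n choose (k + t)) * real (r choose m) *
      (real ((n div q)^2) * real ((2 * q) choose (k + t)) / real (n choose (k + t))) ^ m)
    \<le> real ((2 * q) choose (k + t)) ^ m * real (k + t) ^ ((k + t) * (m - 1)) *
      (real r ^ m * real n ^ (1 + 2 * m) / real n ^ ((k + t) * (m - 1)))"
    using t n k_less_two_q by (intro union_bound_term_le) (auto simp: m_def)
  also have "\<dots> \<le> real ((2 * q) choose (k + t)) ^ m * real (k + t) ^ ((k + t) * (m - 1)) *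
      (real r / real n powr (real k - 3 / 2)) ^ m"
    using n q_pos exponent by (intro mult_left_mono power_ratio_le_powr) (auto simp: m_def)
  finally show ?thesis unfolding m_def by simp
qed

lemma n_fail_prob_le:
  obtains K where "\<And>H n r. 2 * q \<le> n \<Longrightarrow>
    real n * fail_prob H k l n r \<le> K * (real r / real n powr (real k - 3 / 2)) ^ (4 * q + 2)"
proof -
  define K where "K = (\<Sum>t\<in>{1..2 * q - k}.
    real ((2 * q) choose (k + t)) ^ (4 * q + 2) * real (k + t) ^ ((k + t) * (4 * q + 1)))"
  have "real n * fail_prob H k l n r \<le> K * (real r / real n powr (real k - 3 / 2)) ^ (4 * q + 2)"
    if "2 * q \<le> n" for H n r
  proof -
    have "real n * fail_prob H k l n r \<le> real n * (\<Sum>t\<in>{1..2 * q - k}.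
        real (n choose (k + t)) * real (r choose (4 * q + 2)) *
        (real ((n div q)^2) * real ((2 * q) choose (k + t)) / real (n choose (k + t))) ^ (4 * q + 2))"
      by (intro mult_left_mono fail_prob_le) simp
    also have "\<dots> \<le> (\<Sum>t\<in>{1..2 * q - k}.
        real ((2 * q) choose (k + t)) ^ (4 * q + 2) * real (k + t) ^ ((k + t) * (4 * q + 1)) *
        (real r / real n powr (real k - 3 / 2)) ^ (4 * q + 2))"
      unfolding sum_distrib_left by (intro sum_mono n_union_term_le that)
    also have "\<dots> = K * (real r / real n powr (real k - 3 / 2)) ^ (4 * q + 2)"
      unfolding K_def by (simp only: sum_distrib_right)
    finally show ?thesis .
  qed
  then show ?thesis using that by blast
qed

end

theorem lemma7:
  fixes k l :: nat and Hs :: "nat \<Rightarrow> nat set set" and r :: "nat \<Rightarrow> nat"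
  assumes "1 \<le> l" and "2 * l < k"
    and "\<And>n. qpar k l dvd n \<Longrightarrow> kgraph k n (Hs n)"
    and "(\<lambda>n. real (r n) / real n powr (real k - 3 / 2)) \<longlonglongrightarrow> 0"
  shows "\<forall>\<epsilon>>0. \<exists>N. \<forall>n\<ge>N. qpar k l dvd n \<longrightarrow>
           real n * fail_prob (Hs n) k l n (r n) \<le> \<epsilon>"
proof (intro allI impI)
  \<comment> \<open>The bound of \<open>n_fail_prob_le\<close> holds for every edge set.\<close>
  fix \<epsilon> :: real assume "\<epsilon> > 0"
  interpret kl_params k l using assms(1,2) by unfold_locales
  obtain K where K: "\<And>H n r. 2 * q \<le> n \<Longrightarrow>
      real n * fail_prob H k l n r \<le> K * (real r / real n powr (real k - 3 / 2)) ^ (4 * q + 2)"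
    using n_fail_prob_le by blast
  have "(\<lambda>n. K * (real (r n) / real n powr (real k - 3 / 2)) ^ (4 * q + 2)) \<longlonglongrightarrow> K * 0 ^ (4 * q + 2)"
    using assms(4) by (intro tendsto_intros)
  then have "\<forall>\<^sub>F n in sequentially. K * (real (r n) / real n powr (real k - 3 / 2)) ^ (4 * q + 2) < \<epsilon>"
    using \<open>\<epsilon> > 0\<close> by (intro order_tendstoD) simp_all
  then obtain N where "\<And>n. N \<le> n \<Longrightarrow> K * (real (r n) / real n powr (real k - 3 / 2)) ^ (4 * q + 2) < \<epsilon>"
    unfolding eventually_sequentially by blast
  then have "real n * fail_prob (Hs n) k l n (r n) \<le> \<epsilon>" if "max N (2 * q) \<le> n" for n
    using K[of n "Hs n" "r n"] that by fastforce
  then show "\<exists>N. \<forall>n\<ge>N. q dvd n \<longrightarrow> real n * fail_prob (Hs n) k l n (r n) \<le> \<epsilon>"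
    by blast
qed

end
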